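(* For every $l\in w_{1+\infty}$, with $\tilde l=\frac12(l-\iota(l))$ its anti-symmetrization, one has $[\hat l^B,\phi(z)]=[\hat{\tilde l}^B,\phi(z)]$.
   Context: Neutral fermions $\{\phi_i\}_{i\in\mathbb{Z}}$ satisfy $[\phi_i,\phi_j]_+=(-1)^i\delta_{i+j,0}$, acting on the Fock space generated from a vacuum $|0\rangle$ with $\phi_i|0\rangle=0$ for $i<0$; $\langle0|\phi_i=0$ for $i>0$, $\langle0|0\rangle=1$, $\langle0|\phi_0|0\rangle=0$. $\phi(z)=\sum_i\phi_iz^i$; $:\!\phi_i\phi_j\!:\,=\phi_i\phi_j-\langle0|\phi_i\phi_j|0\rangle$. $w_{1+\infty}=\mathrm{span}_{\mathbb{C}}\{z^i\partial_z^j\}$ with involution $\iota(z^k(z\partial_z)^m)=(-z\partial_z)^m(-z)^k$. The B-type realization is $\hat l^B=\frac12\mathrm{Res}_w\,w^{-1}:\!\phi(z)\,(l_w\cdot\phi(w))\!:\big|_{z=-w}$. *)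

theory Defs
  imports "HOL-Analysis.Analysis"
begin

text \<open>The Fock space is modelled concretely: the vector
  phi_{n_1} ... phi_{n_r} |0> with n_1 > ... > n_r >= 0 is the basis vector
  indexed by the finite set {n_1,...,n_r} of naturals.\<close>

type_synonym fvec = "nat set \<Rightarrow> complex"

definition fock :: "fvec set" where
  "fock = {v. finite {S. v S \<noteq> 0} \<and> (\<forall>S. v S \<noteq> 0 \<longrightarrow> finite S)}"

definition vac :: fvec where
  "vac = (\<lambda>S. if S = {} then 1 else 0)"

text \<open>Action of phi_n, derived from [phi_i,phi_j]_+ = (-1)^i delta_{i+j,0},
  phi_i |0> = 0 for i < 0.\<close>
definition phi :: "int \<Rightarrow> fvec \<Rightarrow> fvec" where
  "phi n v = (\<lambda>T.
     if n > 0 then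
       (if nat n \<in> T then (-1) ^ card {t\<in>T. t > nat n} * v (T - {nat n}) else 0)
     else if n < 0 then
       (if nat (-n) \<notin> T
        then (-1) ^ card {t\<in>T. t > nat (-n)} * (-1) ^ nat (-n) * v (insert (nat (-n)) T)
        else 0)
     else
       (if 0 \<in> T then (-1) ^ (card T - 1) * v (T - {0})
        else (-1) ^ card T / 2 * v (insert 0 T)))"

text \<open>Vacuum expectation value <0| X |0> = coefficient of |0> in X|0>.\<close>
definition vev2 :: "int \<Rightarrow> int \<Rightarrow> complex" where
  "vev2 i j = phi i (phi j vac) {}"

definition nord :: "int \<Rightarrow> int \<Rightarrow> fvec \<Rightarrow> fvec" where
  "nord i j v = (\<lambda>T. phi i (phi j v) T - vev2 i j * v T)"

definition fcomm :: "(fvec \<Rightarrow> fvec) \<Rightarrow> (fvec \<Rightarrow> fvec) \<Rightarrow> fvec \<Rightarrow> fvec" where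
  "fcomm A B v = (\<lambda>T. A (B v) T - B (A v) T)"

text \<open>A Laurent polynomial sum_n f(n) z^n is its coefficient function.\<close>
type_synonym lpoly = "int \<Rightarrow> complex"

definition mono :: "int \<Rightarrow> lpoly" where
  "mono j = (\<lambda>n. if n = j then 1 else 0)"

definition zpow :: "int \<Rightarrow> lpoly \<Rightarrow> lpoly" where
  "zpow k f = (\<lambda>n. f (n - k))"

text \<open>the Euler operator z d/dz\<close>
definition Dz :: "lpoly \<Rightarrow> lpoly" where
  "Dz f = (\<lambda>n. of_int n * f n)"

definition zD :: "int \<Rightarrow> nat \<Rightarrow> lpoly \<Rightarrow> lpoly" where
  "zD k m = zpow k \<circ> (Dz ^^ m)"

text \<open>iota(z^k (z d/dz)^m) = (- z d/dz)^m (-z)^k\<close>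
definition iota_basis :: "int \<Rightarrow> nat \<Rightarrow> lpoly \<Rightarrow> lpoly" where
  "iota_basis k m = ((\<lambda>f n. - Dz f n) ^^ m) \<circ> (\<lambda>f n. (-1) ^ nat \<bar>k\<bar> * zpow k f n)"

definition wop :: "(int \<times> nat \<Rightarrow> complex) \<Rightarrow> lpoly \<Rightarrow> lpoly" where
  "wop c f = (\<lambda>n. \<Sum>\<^sub>\<infinity>p. c p * zD (fst p) (snd p) f n)"

definition wiota :: "(int \<times> nat \<Rightarrow> complex) \<Rightarrow> lpoly \<Rightarrow> lpoly" where
  "wiota c f = (\<lambda>n. \<Sum>\<^sub>\<infinity>p. c p * iota_basis (fst p) (snd p) f n)"

definition wtilde :: "(int \<times> nat \<Rightarrow> complex) \<Rightarrow> lpoly \<Rightarrow> lpoly" where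
  "wtilde c f = (\<lambda>n. (wop c f n - wiota c f n) / 2)"

text \<open>hat l^B = 1/2 Res_w w^{-1} :phi(z) (l_w . phi(w)):|_{z=-w}.
  Here l_w . phi(w) = sum_j phi_j l(w^j), phi(-w) = sum_i (-1)^i phi_i w^i,
  and Res_w w^{-1} F(w) is the coefficient of w^0 of F, so
  hat l^B = 1/2 sum_{i,j} (-1)^i [w^{-i}](l(w^j)) :phi_i phi_j:,
  the (locally finite) infinite sum taken coefficientwise.\<close>
definition hatB :: "(lpoly \<Rightarrow> lpoly) \<Rightarrow> fvec \<Rightarrow> fvec" where
  "hatB L v = (\<lambda>T. \<Sum>\<^sub>\<infinity>p. (1/2) * (-1) ^ nat \<bar>fst p\<bar> * L (mono (snd p)) (- fst p)
                            * nord (fst p) (snd p) v T)"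

end

theory Submission
  imports Defs
begin

text \<open>Write \<open>l\<^sup>B = \<Sum>\<^sub>i\<^sub>,\<^sub>j A\<^sub>l(i,j) :\<phi>\<^sub>i\<phi>\<^sub>j:\<close>.  On the basis
  \<open>z\<^sup>k(z\<partial>\<^sub>z)\<^sup>m\<close> one checks that \<open>\<iota>\<close> transposes the coefficient matrix,
  \<open>A\<^bsub>\<iota>(l)\<^esub>(i,j) = A\<^sub>l(j,i)\<close>, while the canonical anticommutation relations make the
  normal ordered product antisymmetric, \<open>:\<phi>\<^sub>i\<phi>\<^sub>j: = -:\<phi>\<^sub>j\<phi>\<^sub>i:\<close>.  Hence only the
  antisymmetric part of \<open>A\<^sub>l\<close> contributes: \<open>l\<close> and its anti-symmetrization already have
  the same B-type realization on the Fock space, and a fortiori the same commutator with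
  \<open>\<phi>(z)\<close>.  On a fixed vector and component only finitely many terms of the double sum
  are nonzero, which justifies the reindexing \<open>(i,j) \<mapsto> (j,i)\<close>.\<close>

text \<open>The basis vector indexed by \<open>T\<close> is \<open>\<phi>\<^sub>n\<^sub>1\<cdots>\<phi>\<^sub>n\<^sub>r|0\<rangle>\<close> with decreasing indices, so
  inserting or removing the mode \<open>a\<close> costs the sign of moving \<open>\<phi>\<^sub>a\<close> past the larger modes.\<close>

definition above_sign :: "nat set \<Rightarrow> nat \<Rightarrow> complex" where
  "above_sign T a = (-1) ^ card {t\<in>T. t > a}"

lemma above_sign_insert:
  assumes "finite T" "a \<notin> T"
  shows "above_sign (insert a T) b = (if b < a then -1 else 1) * above_sign T b"
proof -
  have "{t\<in>insert a T. t > b} = (if b < a then insert a {t\<in>T. t > b} else {t\<in>T. t > b})"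
    by auto
  then show ?thesis using assms by (simp add: above_sign_def)
qed

lemma above_sign_remove:
  assumes "finite T" "a \<in> T"
  shows "above_sign (T - {a}) b = (if b < a then -1 else 1) * above_sign T b"
  using above_sign_insert[of "T - {a}" a b] assms by (auto simp: insert_absorb)

lemma above_sign_insert_self: "above_sign (insert a T) a = above_sign T a"
  unfolding above_sign_def by (rule arg_cong[where f="\<lambda>S. (-1) ^ card S"]) auto

lemma above_sign_remove_self: "above_sign (T - {a}) a = above_sign T a"
  unfolding above_sign_def by (rule arg_cong[where f="\<lambda>S. (-1) ^ card S"]) auto

lemma above_sign_square: "above_sign T a * above_sign T a = 1"
  unfolding above_sign_def by (simp flip: power_add)

definition creation :: "nat \<Rightarrow> fvec \<Rightarrow> fvec" where
  "creation a v = (\<lambda>T. if a \<in> T then above_sign T a * v (T - {a}) else 0)"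

definition annihilation :: "nat \<Rightarrow> fvec \<Rightarrow> fvec" where
  "annihilation a v = (\<lambda>T. if a \<notin> T then above_sign T a * v (insert a T) else 0)"

lemma creation_creation_anticomm:
  assumes "finite T"
  shows "creation a (creation b v) T + creation b (creation a v) T = 0"
proof (cases "a \<noteq> b \<and> a \<in> T \<and> b \<in> T")
  case True
  have "T - {a} - {b} = T - {b} - {a}" by auto
  with True assms show ?thesis by (simp add: creation_def above_sign_remove)
qed (auto simp: creation_def)

lemma annihilation_annihilation_anticomm:
  assumes "finite T"
  shows "annihilation a (annihilation b v) T + annihilation b (annihilation a v) T = 0"
proof (cases "a \<noteq> b \<and> a \<notin> T \<and> b \<notin> T")
  case True
  have "insert a (insert b T) = insert b (insert a T)" by auto
  with True assms show ?thesis by (simp add: annihilation_def above_sign_insert)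
qed (auto simp: annihilation_def)

lemma creation_annihilation_anticomm:
  assumes "finite T"
  shows "creation a (annihilation b v) T + annihilation b (creation a v) T
       = (if a = b then v T else 0)"
proof (cases "a = b")
  case True
  then show ?thesis
    by (cases "a \<in> T") (auto simp: creation_def annihilation_def above_sign_remove_self
        above_sign_insert_self insert_absorb above_sign_square mult.assoc[symmetric])
next
  case False
  show ?thesis
  proof (cases "a \<in> T \<and> b \<notin> T")
    case True
    have "insert b (T - {a}) = insert b T - {a}" using False by auto
    with True False assms show ?thesis
      by (simp add: creation_def annihilation_def above_sign_insert above_sign_remove)
  qed (use False in \<open>auto simp: creation_def annihilation_def\<close>)
qed

definition fermion_op :: "complex \<Rightarrow> complex \<Rightarrow> nat \<Rightarrow> fvec \<Rightarrow> fvec" where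
  "fermion_op x y a v = (\<lambda>T. x * creation a v T + y * annihilation a v T)"

lemma creation_linear:
  "creation a (\<lambda>S. x * u S + y * v S) T = x * creation a u T + y * creation a v T"
  by (simp add: creation_def algebra_simps)

lemma annihilation_linear:
  "annihilation a (\<lambda>S. x * u S + y * v S) T = x * annihilation a u T + y * annihilation a v T"
  by (simp add: annihilation_def algebra_simps)

lemma fermion_op_anticomm:
  assumes "finite T"
  shows "fermion_op x y a (fermion_op x' y' b v) T + fermion_op x' y' b (fermion_op x y a v) T
       = (if a = b then x * y' + y * x' else 0) * v T"
proof -
  have "fermion_op x y a (fermion_op x' y' b v) T + fermion_op x' y' b (fermion_op x y a v) T
      = x * x' * (creation a (creation b v) T + creation b (creation a v) T)
      + x * y' * (creation a (annihilation b v) T + annihilation b (creation a v) T)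
      + y * x' * (creation b (annihilation a v) T + annihilation a (creation b v) T)
      + y * y' * (annihilation a (annihilation b v) T + annihilation b (annihilation a v) T)"
    unfolding fermion_op_def creation_linear annihilation_linear by (simp add: algebra_simps)
  also have "\<dots> = (x * y' + y * x') * (if a = b then v T else 0)"
    unfolding creation_creation_anticomm[OF assms] creation_annihilation_anticomm[OF assms]
      annihilation_annihilation_anticomm[OF assms]
    by (simp add: algebra_simps)
  finally show ?thesis by simp
qed

lemma phi_eq_fermion_op:
  "phi n = fermion_op (if n < 0 then 0 else 1)
                      (if n > 0 then 0 else if n < 0 then (-1) ^ nat \<bar>n\<bar> else 1/2) (nat \<bar>n\<bar>)"
proof (intro ext)
  fix v T
  have "above_sign T 0 = (if 0 \<in> T then (-1) ^ (card T - 1) else (-1) ^ card T)"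
  proof -
    have "{t\<in>T. t > 0} = T - {0}" by auto
    then show ?thesis
      unfolding above_sign_def by (cases "finite T") auto
  qed
  then show "phi n v T = fermion_op (if n < 0 then 0 else 1)
      (if n > 0 then 0 else if n < 0 then (-1) ^ nat \<bar>n\<bar> else 1/2) (nat \<bar>n\<bar>) v T"
    by (auto simp: phi_def fermion_op_def creation_def annihilation_def above_sign_def)
qed

lemma phi_anticomm:
  assumes "finite T"
  shows "phi i (phi j w) T + phi j (phi i w) T = (if i + j = 0 then (-1) ^ nat \<bar>i\<bar> else 0) * w T"
proof -
  have "nat \<bar>i\<bar> = nat \<bar>j\<bar> \<longleftrightarrow> i = j \<or> i + j = 0" by auto
  then show ?thesis
    unfolding phi_eq_fermion_op fermion_op_anticomm[OF assms]
    by (cases i "0::int" rule: linorder_cases; cases j "0::int" rule: linorder_cases) auto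
qed

definition supported_below :: "nat \<Rightarrow> fvec \<Rightarrow> bool" where
  "supported_below M v \<longleftrightarrow> (\<forall>S. v S \<noteq> 0 \<longrightarrow> S \<subseteq> {..<M})"

lemma supported_below_mono: "M \<le> M' \<Longrightarrow> supported_below M v \<Longrightarrow> supported_below M' v"
  unfolding supported_below_def by fastforce

lemma supported_below_infinite: "supported_below M v \<Longrightarrow> infinite S \<Longrightarrow> v S = 0"
  unfolding supported_below_def using finite_nat_iff_bounded by blast

lemma fock_supported_below:
  assumes "v \<in> fock"
  obtains M where "supported_below M v"
proof -
  have "finite (\<Union> {S. v S \<noteq> 0})"
    using assms unfolding fock_def by (intro finite_Union) auto
  then obtain M where "\<Union> {S. v S \<noteq> 0} \<subseteq> {..<M}"
    using finite_nat_iff_bounded by meson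
  then have "supported_below M v"
    unfolding supported_below_def by blast
  then show thesis by (rule that)
qed

lemma supported_below_fermion_op:
  assumes "supported_below M v"
  shows "supported_below (max M (Suc a)) (fermion_op x y a v)"
  using assms unfolding supported_below_def fermion_op_def creation_def annihilation_def
  by (fastforce split: if_splits)

lemma supported_below_phi:
  "supported_below M v \<Longrightarrow> supported_below (max M (Suc (nat \<bar>n\<bar>))) (phi n v)"
  unfolding phi_eq_fermion_op by (rule supported_below_fermion_op)

lemma vev2_anticomm: "vev2 i j + vev2 j i = (if i + j = 0 then (-1) ^ nat \<bar>i\<bar> else 0)"
  using phi_anticomm[of "{}" i j vac] by (simp add: vev2_def vac_def)

lemma nord_antisym:
  assumes "finite T"
  shows "nord j i w T = - nord i j w T"
proof -
  have "nord i j w T + nord j i w T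
      = (phi i (phi j w) T + phi j (phi i w) T) - (vev2 i j + vev2 j i) * w T"
    by (simp add: nord_def algebra_simps)
  also have "\<dots> = 0"
    unfolding phi_anticomm[OF assms] vev2_anticomm by simp
  finally show ?thesis by (simp add: eq_neg_iff_add_eq_0 add.commute)
qed

lemma nord_infinite:
  assumes "supported_below M w" and "infinite T"
  shows "nord i j w T = 0"
proof -
  have "supported_below (max (max M (Suc (nat \<bar>j\<bar>))) (Suc (nat \<bar>i\<bar>))) (phi i (phi j w))"
    using assms(1) by (intro supported_below_phi)
  then show ?thesis
    using assms by (simp add: nord_def supported_below_infinite)
qed

lemma nord_creation_outside: "0 < i \<Longrightarrow> nat i \<notin> T \<Longrightarrow> nord i j w T = 0"
  by (simp add: nord_def vev2_def phi_def)

lemma nord_annihilation_vanishing: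
  assumes "j < 0" and "\<And>S. nat (- j) \<in> S \<Longrightarrow> w S = 0"
  shows "nord i j w T = 0"
proof -
  have annihilated: "phi j u = (\<lambda>_. 0)" if "\<And>S. nat (- j) \<in> S \<Longrightarrow> u S = 0" for u
    using assms(1) that by (simp add: phi_def fun_eq_iff)
  have "phi j w = (\<lambda>_. 0)"
    using assms(2) by (rule annihilated)
  moreover have "phi j vac = (\<lambda>_. 0)"
    by (rule annihilated) (auto simp: vac_def)
  moreover have "phi i (\<lambda>_. 0) = (\<lambda>_. 0)"
    by (simp add: phi_def fun_eq_iff)
  ultimately show ?thesis
    by (simp add: nord_def vev2_def)
qed

lemma nord_eq_0_far:
  assumes w: "supported_below M w" and T: "T \<subseteq> {..<M}"
    and i: "int M \<le> \<bar>i\<bar>" and j: "int M \<le> \<bar>j\<bar>" and M: "0 < M"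
  shows "nord i j w T = 0"
proof -
  have outside: "nat k \<notin> T" if "int M \<le> \<bar>k\<bar>" "0 < k" for k
    using T that by force
  \<comment> \<open>A positive index outside \<open>T\<close> kills the product once antisymmetry has moved it to
    the front; a negative one annihilates a mode that no vector in the support of \<open>w\<close> has.\<close>
  consider "0 < i" | "0 < j" | "j < 0" using j M by linarith
  then show ?thesis
  proof cases
    case 1
    then show ?thesis using i by (intro nord_creation_outside outside)
  next
    case 2
    have "finite T" using T finite_subset by blast
    then show ?thesis
      using 2 j by (simp add: nord_antisym[of T i] nord_creation_outside outside)
  next
    case 3
    have "w S = 0" if "nat (- j) \<in> S" for S
      using w j 3 that unfolding supported_below_def by force
    then show ?thesis by (rule nord_annihilation_vanishing[OF 3])
  qed
qed

lemma infsum_antisymmetric_part: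
  fixes A N :: "'a \<times> 'a \<Rightarrow> 'b::real_normed_field"
  assumes finite: "finite {p. A p * N p \<noteq> 0}"
    and antisym: "\<And>p. N (prod.swap p) = - N p"
  shows "(\<Sum>\<^sub>\<infinity>p. (A p - A (prod.swap p)) / 2 * N p) = (\<Sum>\<^sub>\<infinity>p. A p * N p)"
proof -
  define g where "g p = A p * N p" for p
  have "(g has_sum (\<Sum>p | g p \<noteq> 0. g p)) UNIV"
    using finite unfolding g_def by (intro has_sum_finite_neutralI) auto
  then have g: "(g has_sum infsum g UNIV) UNIV"
    using has_sum_infsum summable_on_def by blast
  have "((\<lambda>p. g (prod.swap p)) has_sum infsum g UNIV) UNIV"
    using has_sum_reindex_bij_betw[of prod.swap UNIV UNIV g] g by simp
  then have "((\<lambda>p. (g p + g (prod.swap p)) / 2) has_sum (infsum g UNIV + infsum g UNIV) / 2) UNIV"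
    using g by (intro has_sum_divide_const has_sum_add)
  moreover have "(A p - A (prod.swap p)) / 2 * N p = (g p + g (prod.swap p)) / 2" for p
    unfolding g_def antisym by (simp add: algebra_simps)
  ultimately show ?thesis
    unfolding g_def by (simp add: infsumI)
qed

definition hatB_coeff :: "(lpoly \<Rightarrow> lpoly) \<Rightarrow> int \<times> int \<Rightarrow> complex" where
  "hatB_coeff L p = 1/2 * (-1) ^ nat \<bar>fst p\<bar> * L (mono (snd p)) (- fst p)"

lemma hatB_eq_infsum: "hatB L w T = (\<Sum>\<^sub>\<infinity>p. hatB_coeff L p * nord (fst p) (snd p) w T)"
  by (simp add: hatB_def hatB_coeff_def)

lemma Dz_power: "(Dz ^^ m) f n = of_int n ^ m * f n"
  by (induction m arbitrary: n) (auto simp: Dz_def)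

lemma neg_Dz_power: "((\<lambda>f n. - Dz f n) ^^ m) f n = (- of_int n) ^ m * f n"
  by (induction m arbitrary: n) (auto simp: Dz_def)

lemma zD_mono: "zD k m (mono j) n = of_int (n - k) ^ m * mono j (n - k)"
  by (simp add: zD_def zpow_def Dz_power)

lemma iota_basis_mono:
  "iota_basis k m (mono j) n = (- of_int n) ^ m * (-1) ^ nat \<bar>k\<bar> * mono j (n - k)"
  by (simp add: iota_basis_def zpow_def neg_Dz_power)

lemma neg_one_power_nat_abs: "(-1::complex) ^ nat \<bar>x\<bar> = (if even x then 1 else -1)"
  by (simp add: even_nat_iff)

lemma iota_basis_mono_transpose:
  "(-1) ^ nat \<bar>i\<bar> * iota_basis k m (mono j) (- i) = (-1) ^ nat \<bar>j\<bar> * zD k m (mono i) (- j)"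
proof (cases "i + j + k = 0")
  case True
  then have j: "j = - (i + k)" by simp
  have sign: "(-1::complex) ^ nat \<bar>i\<bar> * (-1) ^ nat \<bar>k\<bar> = (-1) ^ nat \<bar>j\<bar>"
    unfolding j neg_one_power_nat_abs by simp
  have "(-1) ^ nat \<bar>i\<bar> * iota_basis k m (mono j) (- i)
      = ((-1) ^ nat \<bar>i\<bar> * (-1) ^ nat \<bar>k\<bar>) * of_int i ^ m"
    using True unfolding iota_basis_mono by (simp add: mono_def)
  also have "\<dots> = (-1) ^ nat \<bar>j\<bar> * zD k m (mono i) (- j)"
    unfolding sign zD_mono j by (simp add: mono_def)
  finally show ?thesis .
next
  case False
  then have "mono j (- i - k) = 0" "mono i (- j - k) = 0"
    by (auto simp: mono_def)
  then show ?thesis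
    unfolding iota_basis_mono zD_mono by simp
qed

lemma wop_eq_sum:
  "finite {p. c p \<noteq> 0} \<Longrightarrow> wop c f n = (\<Sum>q | c q \<noteq> 0. c q * zD (fst q) (snd q) f n)"
  unfolding wop_def by (intro infsumI has_sum_finite_neutralI) auto

lemma wiota_eq_sum:
  "finite {p. c p \<noteq> 0} \<Longrightarrow> wiota c f n = (\<Sum>q | c q \<noteq> 0. c q * iota_basis (fst q) (snd q) f n)"
  unfolding wiota_def by (intro infsumI has_sum_finite_neutralI) auto

lemma hatB_coeff_wiota:
  assumes "finite {p. c p \<noteq> 0}"
  shows "hatB_coeff (wiota c) p = hatB_coeff (wop c) (prod.swap p)"
proof (cases p)
  case (Pair i j)
  have "hatB_coeff (wiota c) (i, j)
      = 1/2 * (\<Sum>q | c q \<noteq> 0. c q * ((-1) ^ nat \<bar>i\<bar> * iota_basis (fst q) (snd q) (mono j) (- i)))"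
    by (simp add: hatB_coeff_def wiota_eq_sum[OF assms] sum_distrib_left mult.left_commute)
  also have "\<dots> = 1/2 * (\<Sum>q | c q \<noteq> 0. c q * ((-1) ^ nat \<bar>j\<bar> * zD (fst q) (snd q) (mono i) (- j)))"
    by (simp only: iota_basis_mono_transpose)
  also have "\<dots> = hatB_coeff (wop c) (j, i)"
    by (simp add: hatB_coeff_def wop_eq_sum[OF assms] sum_distrib_left mult.left_commute)
  finally show ?thesis
    using Pair by simp
qed

lemma hatB_coeff_wtilde:
  "hatB_coeff (wtilde c) p = (hatB_coeff (wop c) p - hatB_coeff (wiota c) p) / 2"
  by (simp add: hatB_coeff_def wtilde_def algebra_simps diff_divide_distrib)

lemma hatB_coeff_wop_nonzero:
  assumes "finite {p. c p \<noteq> 0}" and "hatB_coeff (wop c) (i, j) \<noteq> 0"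
  obtains q where "c q \<noteq> 0" and "i + j = - fst q"
proof -
  have "(\<Sum>q | c q \<noteq> 0. c q * zD (fst q) (snd q) (mono j) (- i)) \<noteq> 0"
    using assms by (simp add: hatB_coeff_def wop_eq_sum)
  then obtain q where "c q \<noteq> 0" and "zD (fst q) (snd q) (mono j) (- i) \<noteq> 0"
    by (rule sum.not_neutral_contains_not_neutral) simp
  then show thesis
    using that unfolding zD_mono by (auto simp: mono_def split: if_splits)
qed

lemma finite_hatB_summands:
  assumes c: "finite {p. c p \<noteq> 0}" and w: "supported_below M w" and T: "finite T"
  shows "finite {p. hatB_coeff (wop c) p * nord (fst p) (snd p) w T \<noteq> 0}"
proof -
  obtain MT where MT: "T \<subseteq> {..<MT}"
    using T finite_nat_iff_bounded by meson
  define M' where "M' = max (max M MT) 1"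
  have w': "supported_below M' w" and T': "T \<subseteq> {..<M'}" and M': "0 < M'"
    using supported_below_mono[OF _ w] MT by (auto simp: M'_def)
  define R where "R = int M' + (\<Sum>q | c q \<noteq> 0. \<bar>fst q\<bar>)"
  have "p \<in> {-R..R} \<times> {-R..R}" if "hatB_coeff (wop c) p * nord (fst p) (snd p) w T \<noteq> 0" for p
  proof -
    obtain i j where p: "p = (i, j)" by fastforce
    have coeff: "hatB_coeff (wop c) (i, j) \<noteq> 0" and far: "nord i j w T \<noteq> 0"
      using that p by auto
    obtain q where "c q \<noteq> 0" and "i + j = - fst q"
      using c coeff by (rule hatB_coeff_wop_nonzero)
    then have "\<bar>i + j\<bar> \<le> (\<Sum>q | c q \<noteq> 0. \<bar>fst q\<bar>)"
      using c by (auto intro: member_le_sum)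
    moreover have "\<bar>i\<bar> < int M' \<or> \<bar>j\<bar> < int M'"
      using nord_eq_0_far[OF w' T' _ _ M', of i j] far by linarith
    ultimately show ?thesis
      unfolding p R_def by (auto simp: abs_le_iff)
  qed
  then have "{p. hatB_coeff (wop c) p * nord (fst p) (snd p) w T \<noteq> 0} \<subseteq> {-R..R} \<times> {-R..R}"
    by blast
  then show ?thesis
    by (rule finite_subset) simp
qed

lemma hatB_wop_eq_hatB_wtilde:
  assumes c: "finite {p. c p \<noteq> 0}" and w: "supported_below M w"
  shows "hatB (wop c) w = hatB (wtilde c) w"
proof
  fix T
  show "hatB (wop c) w T = hatB (wtilde c) w T"
  proof (cases "finite T")
    case False
    then show ?thesis
      unfolding hatB_eq_infsum nord_infinite[OF w False] by simp
  next
    case True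
    have "hatB (wtilde c) w T
        = (\<Sum>\<^sub>\<infinity>p. (hatB_coeff (wop c) p - hatB_coeff (wop c) (prod.swap p)) / 2
                 * nord (fst p) (snd p) w T)"
      unfolding hatB_eq_infsum hatB_coeff_wtilde hatB_coeff_wiota[OF c] ..
    also have "\<dots> = hatB (wop c) w T"
      unfolding hatB_eq_infsum
    proof (rule infsum_antisymmetric_part)
      show "finite {p. hatB_coeff (wop c) p * nord (fst p) (snd p) w T \<noteq> 0}"
        using c w True by (rule finite_hatB_summands)
      show "nord (fst (prod.swap p)) (snd (prod.swap p)) w T = - nord (fst p) (snd p) w T" for p
        unfolding fst_swap snd_swap by (rule nord_antisym[OF True])
    qed
    finally show ?thesis ..
  qed
qed

theorem corollary3p5:
  fixes c :: "int \<times> nat \<Rightarrow> complex" and n :: int and v :: fvec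
  assumes "finite {p. c p \<noteq> 0}"
    and "v \<in> fock"
  shows "fcomm (hatB (wop c)) (phi n) v = fcomm (hatB (wtilde c)) (phi n) v"
proof -
  obtain M where M: "supported_below M v"
    using assms(2) by (rule fock_supported_below)
  have "hatB (wop c) v = hatB (wtilde c) v"
    using assms(1) M by (rule hatB_wop_eq_hatB_wtilde)
  moreover have "hatB (wop c) (phi n v) = hatB (wtilde c) (phi n v)"
    using assms(1) supported_below_phi[OF M] by (rule hatB_wop_eq_hatB_wtilde)
  ultimately show ?thesis
    by (simp add: fcomm_def)
qed

end
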